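(* Let $n,m\ge1$, $a\in\mathbb{R}^n$, $d\in\mathbb{R}^m$ with $\|a\|=1\ge\|d\|$, $S_{\le0}=\{(x,y)\in\mathbb{R}^{n+m}:\|x\|\le\|y\|,\ a^\mathsf{T} x+d^\mathsf{T} y\le0\}$, $\lambda\in\mathbb{R}^n$ with $\|\lambda\|=1$, and $\phi_\lambda(y)=\max_x\{\lambda^\mathsf{T} x:(x,y)\in S_{\le0}\}$ for $y\in\mathbb{R}^m$. Then $C^\phi_\lambda=\{(x,y)\in\mathbb{R}^{n+m}:\phi_\lambda(y)\le\lambda^\mathsf{T} x\}$ is maximal $S_{\le0}$-free. Additionally, if $(\bar x,\bar y)\notin S_{\le0}$ satisfies $a^\mathsf{T}\bar x+d^\mathsf{T}\bar y\le0$ and $\lambda=\bar x/\|\bar x\|$, then $(\bar x,\bar y)\in\operatorname{int}(C^\phi_\lambda)$.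
   Context: $\|\cdot\|$ is the Euclidean norm. A convex set $C$ is $S$-free if $\operatorname{int}(C)\cap S=\emptyset$, and maximal $S$-free if it is $S$-free and no $S$-free convex set strictly contains it. *)

theory Defs
  imports "HOL-Analysis.Analysis"
begin

text \<open>Points of R^(n+m) are pairs (x,y) with x in R^n, y in R^m; the product
  of Euclidean spaces carries the Euclidean norm and topology.\<close>

definition S_free :: "'a::real_normed_vector set \<Rightarrow> 'a set \<Rightarrow> bool" where
  "S_free C S \<longleftrightarrow> convex C \<and> interior C \<inter> S = {}"

definition maximal_S_free :: "'a::real_normed_vector set \<Rightarrow> 'a set \<Rightarrow> bool" where
  "maximal_S_free C S \<longleftrightarrow> S_free C S \<and> \<not> (\<exists>C'. S_free C' S \<and> C \<subset> C')"

definition S_le0 :: "real^'n \<Rightarrow> real^'m \<Rightarrow> ((real^'n) \<times> (real^'m)) set" where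
  "S_le0 a d = {(x, y). norm x \<le> norm y \<and> a \<bullet> x + d \<bullet> y \<le> 0}"

text \<open>phi_lambda(y) = max { lambda^T x : (x,y) in S_le0 }; the maximum exists
  (the fibre is nonempty and compact), so it is the supremum.\<close>
definition phi :: "real^'n \<Rightarrow> real^'m \<Rightarrow> real^'n \<Rightarrow> real^'m \<Rightarrow> real" where
  "phi a d l y = Sup {l \<bullet> x | x. (x, y) \<in> S_le0 a d}"

definition C_phi :: "real^'n \<Rightarrow> real^'m \<Rightarrow> real^'n \<Rightarrow> ((real^'n) \<times> (real^'m)) set" where
  "C_phi a d l = {(x, y). phi a d l y \<le> l \<bullet> x}"

end

theory Submission
  imports Defs
begin

(* For fixed y, phi a d l y maximises l.x over the ball of radius |y| cut by the half-space
   a.x <= c, where c = -d.y. Splitting x along a turns this into maximising a linear form over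
   a disc cut by a half-plane; the maximum sits either at the top of the disc or at the corner
   (c, N), where N = sqrt(|y|^2 - (d.y)^2). Both cases are covered by
     phi y = max {w1 c + w2 N | w1^2 + w2^2 = 1, w2 >= 0, w1 >= a.l}.
   As c is linear in y and N is a seminorm (because |d| <= 1), phi is a maximum of convex
   functions, so C_phi is convex. Points of S satisfy l.x <= phi y and so avoid the interior of
   C_phi, which contains the open cone |y| < l.x. Finally, for p outside C_phi the maximiser of
   phi at the y-coordinate of p is a point of S lying strictly between p and a point of that
   cone, so no convex proper enlargement of C_phi is S-free. *)

lemma normal_cone_at_corner:
  fixes t s \<rho> c N r :: real
  assumes "t\<^sup>2 + s\<^sup>2 = \<rho>\<^sup>2" "0 \<le> \<rho>" "0 \<le> s"
    and "c\<^sup>2 + N\<^sup>2 = r\<^sup>2" "0 \<le> r" "0 \<le> N"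
    and "c * \<rho> < r * t"
  shows "s * c \<le> t * N"
proof -
  have E: "(t * N)\<^sup>2 - (s * c)\<^sup>2 = (r * t)\<^sup>2 - (c * \<rho>)\<^sup>2"
    using assms(1,4) by algebra
  consider "c \<le> 0" "0 \<le> t" | "0 < c" | "c \<le> 0" "t < 0" by linarith
  then show ?thesis
  proof cases
    case 1
    then show ?thesis using assms(3,6) by (meson mult_nonneg_nonneg mult_nonneg_nonpos order.trans)
  next
    case 2
    then have "0 \<le> c * \<rho>" using assms(2) by simp
    then have "(c * \<rho>)\<^sup>2 \<le> (r * t)\<^sup>2" using assms(7) by (intro power_mono) auto
    then have "(s * c)\<^sup>2 \<le> (t * N)\<^sup>2" using E by linarith
    moreover have "0 < r * t" using \<open>0 \<le> c * \<rho>\<close> assms(7) by linarith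
    then have "0 \<le> t * N" using assms(5,6) by (simp add: zero_less_mult_iff)
    ultimately show ?thesis by (rule power2_le_imp_le)
  next
    case 3
    then have "r * t \<le> 0" "s * c \<le> 0" using assms(3,5) by (auto simp: mult_nonneg_nonpos)
    have "(- (r * t))\<^sup>2 \<le> (- (c * \<rho>))\<^sup>2" using \<open>r * t \<le> 0\<close> assms(7) by (intro power_mono) auto
    then have "(- (t * N))\<^sup>2 \<le> (- (s * c))\<^sup>2" using E unfolding power2_minus by linarith
    then have "- (t * N) \<le> - (s * c)" by (rule power2_le_imp_le) (use \<open>s * c \<le> 0\<close> in linarith)
    then show ?thesis by simp
  qed
qed

lemma disc_halfplane_max_at_corner:
  fixes t s \<rho> c N r \<alpha> \<beta> :: real
  assumes q: "t\<^sup>2 + s\<^sup>2 = \<rho>\<^sup>2" "0 \<le> \<rho>" "0 \<le> s"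
    and p: "c\<^sup>2 + N\<^sup>2 = r\<^sup>2" "0 \<le> r" "0 \<le> N"
    and corner: "c * \<rho> < r * t"
    and v: "\<alpha> \<le> c" "\<alpha>\<^sup>2 + \<beta>\<^sup>2 \<le> r\<^sup>2"
  shows "t * \<alpha> + s * \<beta> \<le> t * c + s * N"
proof (cases "N = 0")
  case True
  have "\<bar>t\<bar> \<le> \<rho>" using q(1,2)
    by (metis abs_le_square_iff abs_of_nonneg le_add_same_cancel1 zero_le_power2)
  then have "r * t \<le> r * \<rho>" using p(2) by (intro mult_left_mono) auto
  with corner have "c * \<rho> < r * \<rho>" by (simp add: mult.commute)
  then have "c < r" using q(2) by (rule mult_right_less_imp_less)
  moreover have "c\<^sup>2 = r\<^sup>2" using p(1) True by simp
  ultimately have "c = - r" using p(2) by (metis power2_eq_iff less_irrefl)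
  then have "r \<le> - \<alpha>" using v(1) by simp
  then have "r\<^sup>2 \<le> \<alpha>\<^sup>2" using power_mono[of r "- \<alpha>" 2] p(2) by simp
  then have "\<beta>\<^sup>2 \<le> 0" using v(2) by linarith
  have "(- \<alpha>)\<^sup>2 \<le> r\<^sup>2" using v(2) zero_le_power2[of \<beta>] unfolding power2_minus by linarith
  then have "- \<alpha> \<le> r" using p(2) by (rule power2_le_imp_le)
  then have "\<beta> = 0" "\<alpha> = c" using \<open>\<beta>\<^sup>2 \<le> 0\<close> \<open>r \<le> - \<alpha>\<close> \<open>c = - r\<close> by simp_all
  then show ?thesis using True by simp
next
  case False
  then have "0 < N" using p(3) by simp
  have cone: "s * c \<le> t * N" by (rule normal_cone_at_corner[OF q p corner])
  \<comment> \<open>\<open>N (t, s) = s (c, N) + (t N - s c) (1, 0)\<close>: a nonnegative combination of the outer normals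
    of the disc and of the half-plane at the corner\<close>
  have "2 * (c * \<alpha> + N * \<beta>) = (c\<^sup>2 + N\<^sup>2) + (\<alpha>\<^sup>2 + \<beta>\<^sup>2) - ((c - \<alpha>)\<^sup>2 + (N - \<beta>)\<^sup>2)"
    by algebra
  then have "2 * (c * \<alpha> + N * \<beta>) \<le> 2 * r\<^sup>2"
    using p(1) v(2) zero_le_power2[of "c - \<alpha>"] zero_le_power2[of "N - \<beta>"] by linarith
  then have disc: "c * \<alpha> + N * \<beta> \<le> r\<^sup>2" by simp
  have "N * (t * \<alpha> + s * \<beta>) = s * (c * \<alpha> + N * \<beta>) + (t * N - s * c) * \<alpha>"
    by (simp add: algebra_simps)
  also have "\<dots> \<le> s * r\<^sup>2 + (t * N - s * c) * c"
    using disc cone q(3) v(1) by (intro add_mono mult_left_mono) auto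
  also have "\<dots> = N * (t * c + s * N)"
    using p(1) by algebra
  finally show ?thesis using \<open>0 < N\<close> by (rule mult_left_le_imp_le)
qed

lemma unit_inner_le_radius:
  fixes u1 u2 x y r :: real
  assumes "u1\<^sup>2 + u2\<^sup>2 = 1" "x\<^sup>2 + y\<^sup>2 \<le> r\<^sup>2" "0 \<le> r"
  shows "u1 * x + u2 * y \<le> r"
proof -
  have "(u1 * x + u2 * y)\<^sup>2 + (u1 * y - u2 * x)\<^sup>2 = x\<^sup>2 + y\<^sup>2"
    using assms(1) by algebra
  then have "(u1 * x + u2 * y)\<^sup>2 \<le> r\<^sup>2" using assms(2) zero_le_power2[of "u1 * y - u2 * x"] by linarith
  then show ?thesis using assms(3) by (rule power2_le_imp_le)
qed

lemma disc_halfplane_le_arc: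
  fixes t s c N r \<alpha> \<beta> :: real
  assumes q: "t\<^sup>2 + s\<^sup>2 = 1" "0 \<le> s"
    and p: "c\<^sup>2 + N\<^sup>2 = r\<^sup>2" "0 \<le> r" "0 \<le> N"
    and v: "\<alpha> \<le> c" "\<alpha>\<^sup>2 + \<beta>\<^sup>2 \<le> r\<^sup>2"
  obtains u1 u2 where "u1\<^sup>2 + u2\<^sup>2 = 1" "0 \<le> u2" "t \<le> u1" "t * \<alpha> + s * \<beta> \<le> u1 * c + u2 * N"
proof (cases "c < r * t")
  case True
  then have "t * \<alpha> + s * \<beta> \<le> t * c + s * N"
    using disc_halfplane_max_at_corner[of t s 1] q p v by simp
  then show ?thesis using q by (intro that[of t s]) auto
next
  case False
  have le_r: "t * \<alpha> + s * \<beta> \<le> r" using unit_inner_le_radius[OF q(1) v(2) p(2)] .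
  show ?thesis
  proof (cases "r = 0")
    case True
    then have "c = 0" "N = 0" using p(1) by simp_all
    then show ?thesis using q le_r True by (intro that[of t s]) auto
  next
    case False
    then have "0 < r" using p(2) by simp
    have "(c / r)\<^sup>2 + (N / r)\<^sup>2 = 1" using p(1) \<open>0 < r\<close> by (simp add: power_divide flip: add_divide_distrib)
    moreover have "0 \<le> N / r" using p(3) \<open>0 < r\<close> by simp
    moreover have "t \<le> c / r" using \<open>\<not> c < r * t\<close> \<open>0 < r\<close> by (simp add: pos_le_divide_eq mult.commute)
    moreover have "(c / r) * c + (N / r) * N = r"
      using p(1) \<open>0 < r\<close> by (simp add: field_simps power2_eq_square)
    ultimately show ?thesis using le_r by (intro that[of "c / r" "N / r"]) auto
  qed
qed

lemma arc_le_disc_halfplane: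
  fixes t s c N r u1 u2 :: real
  assumes q: "t\<^sup>2 + s\<^sup>2 = 1" "0 \<le> s"
    and p: "c\<^sup>2 + N\<^sup>2 = r\<^sup>2" "0 \<le> r" "0 \<le> N"
    and u: "u1\<^sup>2 + u2\<^sup>2 = 1" "0 \<le> u2" "t \<le> u1"
  obtains \<alpha> \<beta> where "\<alpha> \<le> c" "\<alpha>\<^sup>2 + \<beta>\<^sup>2 \<le> r\<^sup>2" "u1 * c + u2 * N \<le> t * \<alpha> + s * \<beta>"
proof (cases "c < r * t")
  case True
  \<comment> \<open>the corner lemma (homogeneous in \<open>(t, s)\<close>) with the roles of the linear form and the
    corner exchanged\<close>
  have "(- c) * (- u1) + N * u2 \<le> (- c) * (- t) + N * s"
    using disc_halfplane_max_at_corner[of "- c" N r "- t" s 1 "- u1" u2] q p u True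
    by (simp add: mult.commute)
  then show ?thesis using p(1) by (intro that[of c N]) (simp_all add: mult.commute)
next
  case False
  have "u1 * c + u2 * N \<le> r" using unit_inner_le_radius[OF u(1)] p by simp
  also have "r = t * (r * t) + s * (r * s)" using q(1) by algebra
  finally show ?thesis
    using False q(1) by (intro that[of "r * t" "r * s"]) (simp_all add: power_mult_distrib flip: distrib_left)
qed

lemma norm_sq_orthogonal_split:
  fixes a x :: "'a::real_inner"
  assumes "norm a = 1"
  shows "(a \<bullet> x)\<^sup>2 + (norm (x - (a \<bullet> x) *\<^sub>R a))\<^sup>2 = (norm x)\<^sup>2"
proof -
  have "a \<bullet> a = 1" using assms by (simp add: dot_square_norm)
  then show ?thesis unfolding power2_norm_eq_inner
    by (simp add: inner_commute power2_eq_square algebra_simps)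
qed

lemma inner_le_orthogonal_split:
  fixes a l x :: "'a::real_inner"
  assumes "norm a = 1"
  shows "l \<bullet> x \<le> (a \<bullet> l) * (a \<bullet> x) + norm (l - (a \<bullet> l) *\<^sub>R a) * norm (x - (a \<bullet> x) *\<^sub>R a)"
proof -
  have "a \<bullet> a = 1" using assms by (simp add: dot_square_norm)
  then have "l \<bullet> x = (a \<bullet> l) * (a \<bullet> x) + (l - (a \<bullet> l) *\<^sub>R a) \<bullet> (x - (a \<bullet> x) *\<^sub>R a)"
    by (simp add: inner_commute algebra_simps)
  then show ?thesis using norm_cauchy_schwarz by (metis add_left_mono)
qed

lemma orthogonal_lift:
  fixes a l :: "'a::real_inner" and \<alpha> \<beta> :: real
  assumes "norm a = 1"
  obtains x where "a \<bullet> x = \<alpha>" "(norm x)\<^sup>2 \<le> \<alpha>\<^sup>2 + \<beta>\<^sup>2"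
    "l \<bullet> x = (a \<bullet> l) * \<alpha> + norm (l - (a \<bullet> l) *\<^sub>R a) * \<beta>"
proof -
  define e where "e = l - (a \<bullet> l) *\<^sub>R a"
  define s where "s = norm e"
  \<comment> \<open>if \<open>s = 0\<close> then \<open>\<beta> / s = 0\<close>, and the \<open>\<beta>\<close>-term of the claim vanishes as well\<close>
  define x where "x = \<alpha> *\<^sub>R a + (\<beta> / s) *\<^sub>R e"
  have "a \<bullet> a = 1" using assms by (simp add: dot_square_norm)
  then have ae: "a \<bullet> e = 0" unfolding e_def by (simp add: inner_diff_right)
  have ee: "e \<bullet> e = s\<^sup>2" unfolding s_def by (simp add: dot_square_norm)
  have "a \<bullet> x = \<alpha>" unfolding x_def using \<open>a \<bullet> a = 1\<close> ae by (simp add: inner_add_right)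
  moreover have "(norm x)\<^sup>2 = \<alpha>\<^sup>2 + (\<beta> / s)\<^sup>2 * s\<^sup>2"
    unfolding x_def power2_norm_eq_inner using \<open>a \<bullet> a = 1\<close> ae ee
    by (simp add: inner_add_left inner_add_right inner_commute power2_eq_square)
  moreover have "(\<beta> / s)\<^sup>2 * s\<^sup>2 \<le> \<beta>\<^sup>2" by (cases "s = 0") (simp_all add: power_divide)
  moreover have "l \<bullet> e = s\<^sup>2"
    using ae ee unfolding e_def by (simp add: inner_diff_left inner_commute)
  then have "l \<bullet> x = (a \<bullet> l) * \<alpha> + s * \<beta>"
    unfolding x_def by (cases "s = 0") (simp_all add: inner_add_right inner_commute power2_eq_square)
  ultimately show ?thesis using that unfolding s_def e_def by auto
qed

lemma abs_inner_le_norm: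
  fixes d y :: "'a::real_inner"
  assumes "norm d \<le> 1"
  shows "\<bar>d \<bullet> y\<bar> \<le> norm y"
  using Cauchy_Schwarz_ineq2[of d y] assms by (meson mult_left_le_one_le norm_ge_zero order.trans)

definition transverse_norm :: "'a::real_inner \<Rightarrow> 'a \<Rightarrow> real" where
  "transverse_norm d y = sqrt ((norm y)\<^sup>2 - (d \<bullet> y)\<^sup>2)"

lemma transverse_norm_sq:
  fixes d y :: "'a::real_inner"
  assumes "norm d \<le> 1"
  shows "(d \<bullet> y)\<^sup>2 + (transverse_norm d y)\<^sup>2 = (norm y)\<^sup>2"
proof -
  have "\<bar>d \<bullet> y\<bar>\<^sup>2 \<le> (norm y)\<^sup>2" using abs_inner_le_norm[OF assms] by (rule power_mono) simp
  then have "(d \<bullet> y)\<^sup>2 \<le> (norm y)\<^sup>2" by simp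
  then show ?thesis unfolding transverse_norm_def by simp
qed

lemma transverse_norm_eq_norm:
  fixes d y :: "'a::real_inner"
  assumes "norm d \<le> 1"
  shows "transverse_norm d y = norm (y - ((d \<bullet> y) / (1 + sqrt (1 - (norm d)\<^sup>2))) *\<^sub>R d)"
proof -
  define q where "q = sqrt (1 - (norm d)\<^sup>2)"
  define g where "g = 1 / (1 + q)"
  have "(norm d)\<^sup>2 \<le> 1" using assms by (simp add: abs_square_le_1)
  then have "0 \<le> q" "d \<bullet> d = 1 - q\<^sup>2" unfolding q_def by (simp_all add: dot_square_norm)
  \<comment> \<open>\<open>g\<close> solves \<open>2 g - g\<^sup>2 (d \<bullet> d) = 1\<close>, so \<open>I - g d d\<^sup>T\<close> is a square root of \<open>I - d d\<^sup>T\<close>\<close>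
  have g: "2 * g - g\<^sup>2 * (d \<bullet> d) = 1"
  proof -
    have "g * (1 + q) = 1" unfolding g_def using \<open>0 \<le> q\<close> by simp
    then show ?thesis unfolding \<open>d \<bullet> d = 1 - q\<^sup>2\<close> by algebra
  qed
  have "(norm (y - (g * (d \<bullet> y)) *\<^sub>R d))\<^sup>2 = y \<bullet> y - (d \<bullet> y)\<^sup>2 * (2 * g - g\<^sup>2 * (d \<bullet> d))"
    unfolding power2_norm_eq_inner
    by (simp add: inner_commute power2_eq_square algebra_simps)
  also have "\<dots> = (norm y)\<^sup>2 - (d \<bullet> y)\<^sup>2" unfolding g by (simp add: dot_square_norm)
  finally show ?thesis unfolding transverse_norm_def g_def q_def
    by (metis norm_ge_zero real_sqrt_unique times_divide_eq_left mult_1)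
qed

lemma transverse_norm_nonneg:
  fixes d y :: "'a::real_inner"
  assumes "norm d \<le> 1"
  shows "0 \<le> transverse_norm d y"
  using transverse_norm_eq_norm[OF assms] by simp

lemma convex_on_transverse_norm:
  fixes d :: "'a::real_inner"
  assumes "norm d \<le> 1"
  shows "convex_on UNIV (transverse_norm d)"
  unfolding convex_on_def
proof (intro conjI ballI allI impI convex_UNIV)
  fix y1 y2 :: 'a and u v :: real
  assume uv: "0 \<le> u" "0 \<le> v" "u + v = 1"
  define g where "g = 1 / (1 + sqrt (1 - (norm d)\<^sup>2))"
  define L where "L y = y - (g * (d \<bullet> y)) *\<^sub>R d" for y
  have tn: "transverse_norm d y = norm (L y)" for y
    using transverse_norm_eq_norm[OF assms] unfolding L_def g_def by simp
  have "L (u *\<^sub>R y1 + v *\<^sub>R y2) = u *\<^sub>R L y1 + v *\<^sub>R L y2"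
    unfolding L_def by (simp add: algebra_simps)
  then show "transverse_norm d (u *\<^sub>R y1 + v *\<^sub>R y2) \<le> u * transverse_norm d y1 + v * transverse_norm d y2"
    unfolding tn using norm_triangle_ineq[of "u *\<^sub>R L y1" "v *\<^sub>R L y2"] uv by simp
qed

lemma in_open_segment_extension:
  fixes s p :: "'a::real_vector"
  assumes "0 < \<sigma>" "s \<noteq> p"
  shows "s \<in> open_segment (s + \<sigma> *\<^sub>R (s - p)) p"
proof -
  define q where "q = s + \<sigma> *\<^sub>R (s - p)"
  define u where "u = \<sigma> / (1 + \<sigma>)"
  have "(1 + \<sigma>) * (1 - u) = 1" "(1 + \<sigma>) * u = \<sigma>"
    unfolding u_def using assms(1) by (simp_all add: field_simps)
  then have "(1 + \<sigma>) *\<^sub>R ((1 - u) *\<^sub>R q + u *\<^sub>R p) = q + \<sigma> *\<^sub>R p"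
    by (simp add: scaleR_add_right)
  also have "\<dots> = (1 + \<sigma>) *\<^sub>R s" unfolding q_def by (simp add: algebra_simps)
  finally have "s = (1 - u) *\<^sub>R q + u *\<^sub>R p" using assms(1) by simp
  moreover have "q \<noteq> p"
  proof
    assume "q = p"
    then have "(1 + \<sigma>) *\<^sub>R (s - p) = 0" unfolding q_def by (simp add: algebra_simps)
    then show False using assms by simp
  qed
  moreover have "0 < u" "u < 1" unfolding u_def using assms(1) by simp_all
  ultimately show ?thesis unfolding in_segment q_def by blast
qed


lemma maximal_S_freeI:
  fixes C S :: "'a::euclidean_space set"
  assumes "S_free C S"
    and "\<And>p. p \<notin> C \<Longrightarrow> \<exists>s\<in>S. \<exists>q\<in>interior C. s \<in> open_segment q p"
  shows "maximal_S_free C S"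
  unfolding maximal_S_free_def
proof (intro conjI notI assms(1))
  assume "\<exists>C'. S_free C' S \<and> C \<subset> C'"
  then obtain C' p where C': "convex C'" "interior C' \<inter> S = {}" "C \<subseteq> C'" and p: "p \<in> C'" "p \<notin> C"
    unfolding S_free_def by blast
  obtain s q where s: "s \<in> S" "q \<in> interior C" "s \<in> open_segment q p" using assms(2)[OF p(2)] by blast
  have "q \<in> interior C'" using s(2) interior_mono[OF C'(3)] by blast
  then have "open_segment q p \<subseteq> interior C'"
    using in_interior_closure_convex_segment[OF C'(1)] p(1) closure_subset by blast
  then show False using s(1,3) C'(2) by blast
qed


lemma mem_S_le0: "(x, y) \<in> S_le0 a d \<longleftrightarrow> norm x \<le> norm y \<and> a \<bullet> x \<le> - (d \<bullet> y)"
  by (auto simp: S_le0_def)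

lemma inner_le_phi:
  assumes "(x, y) \<in> S_le0 a d"
  shows "l \<bullet> x \<le> phi a d l y"
  unfolding phi_def
proof (rule cSup_upper)
  show "l \<bullet> x \<in> {l \<bullet> x |x. (x, y) \<in> S_le0 a d}" using assms by blast
  have "l \<bullet> x' \<le> norm l * norm y" if "(x', y) \<in> S_le0 a d" for x'
    using norm_cauchy_schwarz[of l x'] mult_left_mono[of "norm x'" "norm y" "norm l"] that
    by (simp add: mem_S_le0)
  then show "bdd_above {l \<bullet> x |x. (x, y) \<in> S_le0 a d}" by (intro bdd_aboveI) blast
qed

lemma phi_attained:
  assumes "norm a = 1" "norm d \<le> 1"
  obtains x where "(x, y) \<in> S_le0 a d" "l \<bullet> x = phi a d l y"
proof -
  let ?F = "{x. (x, y) \<in> S_le0 a d}"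
  have "?F = cball 0 (norm y) \<inter> {x. a \<bullet> x \<le> - (d \<bullet> y)}" by (auto simp: mem_S_le0)
  then have "compact ?F" by (simp add: compact_Int_closed closed_halfspace_le)
  moreover have "(- (d \<bullet> y)) *\<^sub>R a \<in> ?F"
    using abs_inner_le_norm[OF assms(2), of y] assms(1) by (simp add: mem_S_le0 dot_square_norm)
  moreover have "continuous_on ?F (\<lambda>x. l \<bullet> x)" by (intro continuous_intros)
  ultimately obtain x where x: "x \<in> ?F" "\<forall>x'\<in>?F. l \<bullet> x' \<le> l \<bullet> x"
    using continuous_attains_sup[of ?F "\<lambda>x. l \<bullet> x"] by blast
  then have "phi a d l y = l \<bullet> x" unfolding phi_def by (intro cSup_eq_maximum) auto
  then show ?thesis using x(1) that by simp
qed

lemma phi_le_norm: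
  assumes "norm a = 1" "norm d \<le> 1" "norm l = 1"
  shows "phi a d l y \<le> norm y"
proof -
  obtain x where "(x, y) \<in> S_le0 a d" "l \<bullet> x = phi a d l y" using phi_attained assms(1,2) .
  then show ?thesis using norm_cauchy_schwarz[of l x] assms(3) by (simp add: mem_S_le0)
qed

lemma phi_le_arc:
  assumes "norm a = 1" "norm d \<le> 1" "norm l = 1"
  obtains w1 w2 where "w1\<^sup>2 + w2\<^sup>2 = 1" "0 \<le> w2" "a \<bullet> l \<le> w1"
    "phi a d l y \<le> w1 * - (d \<bullet> y) + w2 * transverse_norm d y"
proof -
  obtain x where x: "(x, y) \<in> S_le0 a d" "l \<bullet> x = phi a d l y" using phi_attained assms(1,2) .
  let ?s = "norm (l - (a \<bullet> l) *\<^sub>R a)" and ?\<beta> = "norm (x - (a \<bullet> x) *\<^sub>R a)"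
  have ts: "(a \<bullet> l)\<^sup>2 + ?s\<^sup>2 = 1" using norm_sq_orthogonal_split[OF assms(1), of l] assms(3) by simp
  have cN: "(- (d \<bullet> y))\<^sup>2 + (transverse_norm d y)\<^sup>2 = (norm y)\<^sup>2"
    using transverse_norm_sq[OF assms(2)] by simp
  have "(norm x)\<^sup>2 \<le> (norm y)\<^sup>2" using x(1) by (simp add: mem_S_le0 power_mono)
  then have \<alpha>\<beta>: "(a \<bullet> x)\<^sup>2 + ?\<beta>\<^sup>2 \<le> (norm y)\<^sup>2"
    using norm_sq_orthogonal_split[OF assms(1), of x] by simp
  have \<alpha>: "a \<bullet> x \<le> - (d \<bullet> y)" using x(1) by (simp add: mem_S_le0)
  obtain w1 w2 where w: "w1\<^sup>2 + w2\<^sup>2 = 1" "0 \<le> w2" "a \<bullet> l \<le> w1"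
    and le: "(a \<bullet> l) * (a \<bullet> x) + ?s * ?\<beta> \<le> w1 * - (d \<bullet> y) + w2 * transverse_norm d y"
    by (rule disc_halfplane_le_arc[OF ts norm_ge_zero cN norm_ge_zero
          transverse_norm_nonneg[OF assms(2)] \<alpha> \<alpha>\<beta>])
  have "phi a d l y \<le> (a \<bullet> l) * (a \<bullet> x) + ?s * ?\<beta>"
    using inner_le_orthogonal_split[OF assms(1), of l x] x(2) by simp
  then show ?thesis using le by (intro that[OF w]) linarith
qed

lemma arc_le_phi:
  assumes "norm a = 1" "norm d \<le> 1" "norm l = 1"
    and w: "w1\<^sup>2 + w2\<^sup>2 = 1" "0 \<le> w2" "a \<bullet> l \<le> w1"
  shows "w1 * - (d \<bullet> y) + w2 * transverse_norm d y \<le> phi a d l y"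
proof -
  let ?s = "norm (l - (a \<bullet> l) *\<^sub>R a)"
  have ts: "(a \<bullet> l)\<^sup>2 + ?s\<^sup>2 = 1" using norm_sq_orthogonal_split[OF assms(1), of l] assms(3) by simp
  have cN: "(- (d \<bullet> y))\<^sup>2 + (transverse_norm d y)\<^sup>2 = (norm y)\<^sup>2"
    using transverse_norm_sq[OF assms(2)] by simp
  obtain \<alpha> \<beta> where ab: "\<alpha> \<le> - (d \<bullet> y)" "\<alpha>\<^sup>2 + \<beta>\<^sup>2 \<le> (norm y)\<^sup>2"
    "w1 * - (d \<bullet> y) + w2 * transverse_norm d y \<le> (a \<bullet> l) * \<alpha> + ?s * \<beta>"
    by (rule arc_le_disc_halfplane[OF ts norm_ge_zero cN norm_ge_zero
          transverse_norm_nonneg[OF assms(2)] w])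
  obtain x where x: "a \<bullet> x = \<alpha>" "(norm x)\<^sup>2 \<le> \<alpha>\<^sup>2 + \<beta>\<^sup>2" "l \<bullet> x = (a \<bullet> l) * \<alpha> + ?s * \<beta>"
    using orthogonal_lift[OF assms(1)] .
  have "(norm x)\<^sup>2 \<le> (norm y)\<^sup>2" using x(2) ab(2) by linarith
  then have "norm x \<le> norm y" by (rule power2_le_imp_le) simp
  then have "(x, y) \<in> S_le0 a d" using x(1) ab(1) by (simp add: mem_S_le0)
  then show ?thesis using inner_le_phi[of x y a d l] ab(3) x(3) by simp
qed

lemma convex_on_phi:
  fixes a l :: "real^'n" and d :: "real^'m"
  assumes "norm a = 1" "norm d \<le> 1" "norm l = 1"
  shows "convex_on UNIV (phi a d l)"
  unfolding convex_on_def
proof (intro conjI ballI allI impI convex_UNIV)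
  fix y1 y2 :: "real^'m" and u v :: real
  assume uv: "0 \<le> u" "0 \<le> v" "u + v = 1"
  let ?y = "u *\<^sub>R y1 + v *\<^sub>R y2"
  obtain w1 w2 where w: "w1\<^sup>2 + w2\<^sup>2 = 1" "0 \<le> w2" "a \<bullet> l \<le> w1"
    and le: "phi a d l ?y \<le> w1 * - (d \<bullet> ?y) + w2 * transverse_norm d ?y"
    using phi_le_arc assms .
  have "transverse_norm d ?y \<le> u * transverse_norm d y1 + v * transverse_norm d y2"
    using convex_on_transverse_norm[OF assms(2)] uv by (simp add: convex_on_def)
  then have "w2 * transverse_norm d ?y \<le> w2 * (u * transverse_norm d y1 + v * transverse_norm d y2)"
    using w(2) by (rule mult_left_mono)
  moreover have "u * (w1 * - (d \<bullet> y1) + w2 * transverse_norm d y1)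
      + v * (w1 * - (d \<bullet> y2) + w2 * transverse_norm d y2)
      = w1 * - (d \<bullet> ?y) + w2 * (u * transverse_norm d y1 + v * transverse_norm d y2)"
    by (simp add: algebra_simps)
  moreover have "u * (w1 * - (d \<bullet> y1) + w2 * transverse_norm d y1)
      + v * (w1 * - (d \<bullet> y2) + w2 * transverse_norm d y2) \<le> u * phi a d l y1 + v * phi a d l y2"
    using arc_le_phi[OF assms w] uv by (intro add_mono mult_left_mono) auto
  ultimately show "phi a d l ?y \<le> u * phi a d l y1 + v * phi a d l y2" using le by linarith
qed

lemma convex_C_phi:
  fixes a l :: "real^'n" and d :: "real^'m"
  assumes "norm a = 1" "norm d \<le> 1" "norm l = 1"
  shows "convex (C_phi a d l)"
proof -
  let ?f = "\<lambda>(x::real^'n, y::real^'m). (y, l \<bullet> x)"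
  have "linear ?f" by (intro linearI) (auto simp: inner_add_right)
  moreover have "C_phi a d l = ?f -` epigraph UNIV (phi a d l)"
    by (auto simp: C_phi_def epigraph_def)
  ultimately show ?thesis
    using convex_linear_vimage convex_epigraphI[OF convex_on_phi[OF assms]] by simp
qed

lemma interior_C_phi_subset:
  fixes a l :: "real^'n" and d :: "real^'m"
  assumes "norm l = 1"
  shows "interior (C_phi a d l) \<subseteq> {(x, y). phi a d l y < l \<bullet> x}"
proof clarify
  fix x y assume "(x, y) \<in> interior (C_phi a d l)"
  then obtain e where e: "0 < e" "ball (x, y) e \<subseteq> C_phi a d l" by (meson mem_interior)
  have "(x - (e / 2) *\<^sub>R l, y) \<in> ball (x, y) e"
    using e(1) assms by (simp add: dist_Pair_Pair dist_norm)
  then have "phi a d l y \<le> l \<bullet> x - e / 2"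
    using e(2) assms by (auto simp: C_phi_def inner_diff_right dot_square_norm)
  then show "phi a d l y < l \<bullet> x" using e(1) by simp
qed

lemma S_free_C_phi:
  fixes a l :: "real^'n" and d :: "real^'m"
  assumes "norm a = 1" "norm d \<le> 1" "norm l = 1"
  shows "S_free (C_phi a d l) (S_le0 a d)"
  using convex_C_phi[OF assms] interior_C_phi_subset[OF assms(3)] inner_le_phi[of _ _ a d l]
  unfolding S_free_def by fastforce

lemma cone_subset_interior_C_phi:
  fixes a l :: "real^'n" and d :: "real^'m"
  assumes "norm a = 1" "norm d \<le> 1" "norm l = 1"
  shows "{(x, y). norm y < l \<bullet> x} \<subseteq> interior (C_phi a d l)"
proof (rule interior_maximal)
  show "{(x, y). norm y < l \<bullet> x} \<subseteq> C_phi a d l"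
  proof clarify
    fix x and y :: "real^'m" assume "norm y < l \<bullet> x"
    then show "(x, y) \<in> C_phi a d l" using phi_le_norm[OF assms, of y] by (simp add: C_phi_def)
  qed
  have "open {p. norm (snd p) < l \<bullet> fst p}"
    by (intro open_Collect_less continuous_intros)
  then show "open {(x, y). norm y < l \<bullet> x}" by (simp add: case_prod_beta')
qed

lemma open_segment_from_outside_C_phi_meets_S_le0:
  fixes a l :: "real^'n" and d :: "real^'m"
  assumes "norm a = 1" "norm d \<le> 1" "norm l = 1" and "p \<notin> C_phi a d l"
  shows "\<exists>s\<in>S_le0 a d. \<exists>q\<in>interior (C_phi a d l). s \<in> open_segment q p"
proof -
  obtain x0 y0 where p: "p = (x0, y0)" by fastforce
  then have lt: "l \<bullet> x0 < phi a d l y0" using assms(4) by (simp add: C_phi_def)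
  obtain xs where xs: "(xs, y0) \<in> S_le0 a d" "l \<bullet> xs = phi a d l y0"
    using phi_attained assms(1,2) .
  define \<sigma> where "\<sigma> = (norm y0 - phi a d l y0 + 1) / (phi a d l y0 - l \<bullet> x0)"
  have "0 < \<sigma>" unfolding \<sigma>_def using lt phi_le_norm[OF assms(1-3), of y0] by simp
  \<comment> \<open>\<open>\<sigma>\<close> is large enough for the ray from \<open>p\<close> through \<open>(xs, y0)\<close> to reach the cone
    \<open>norm y < l \<bullet> x\<close>\<close>
  have "\<sigma> * (phi a d l y0 - l \<bullet> x0) = norm y0 - phi a d l y0 + 1" unfolding \<sigma>_def using lt by simp
  then have "l \<bullet> (xs + \<sigma> *\<^sub>R (xs - x0)) = norm y0 + 1"
    using xs(2) by (simp add: inner_add_right inner_diff_right right_diff_distrib)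
  then have "(xs, y0) + \<sigma> *\<^sub>R ((xs, y0) - p) \<in> interior (C_phi a d l)"
    using cone_subset_interior_C_phi[OF assms(1-3)] p by auto
  moreover have "(xs, y0) \<in> open_segment ((xs, y0) + \<sigma> *\<^sub>R ((xs, y0) - p)) p"
    using \<open>0 < \<sigma>\<close> lt xs(2) p by (intro in_open_segment_extension) auto
  ultimately show ?thesis using xs(1) by blast
qed

theorem proposition6:
  fixes a :: "real^'n" and d :: "real^'m" and l :: "real^'n"
  assumes "norm a = 1" and "norm d \<le> 1" and "norm l = 1"
  shows "maximal_S_free (C_phi a d l) (S_le0 a d) \<and>
    (\<forall>xb yb. (xb, yb) \<notin> S_le0 a d \<and> a \<bullet> xb + d \<bullet> yb \<le> 0 \<and> l = xb /\<^sub>R norm xb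
       \<longrightarrow> (xb, yb) \<in> interior (C_phi a d l))"
proof (intro conjI allI impI)
  show "maximal_S_free (C_phi a d l) (S_le0 a d)"
    using S_free_C_phi[OF assms] open_segment_from_outside_C_phi_meets_S_le0[OF assms]
    by (rule maximal_S_freeI)
  fix xb yb
  assume "(xb, yb) \<notin> S_le0 a d \<and> a \<bullet> xb + d \<bullet> yb \<le> 0 \<and> l = xb /\<^sub>R norm xb"
  then have "norm yb < norm xb" "l = xb /\<^sub>R norm xb" by (auto simp: mem_S_le0)
  moreover from this have "l \<bullet> xb = norm xb"
    by (cases "xb = 0") (simp_all add: dot_square_norm power2_eq_square)
  ultimately show "(xb, yb) \<in> interior (C_phi a d l)"
    using cone_subset_interior_C_phi[OF assms] by auto
qed

end
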